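(* Let $r,s,t,u,v$ be non-negative integers with $u+v=4t-r-s+3$. Let $G=(r,s,t,t,t,u)$ and $H=(r,s,t,t,t,v)$, with interesting factors $g(x)$ and $h(x)$ respectively. Then $$g(x)=-h(-x+6t+4).$$
   Context: All graphs are finite and simple. For integers $1\le j\le k$, a $(j,k)$-biclique is a graph whose vertex set is the disjoint union of a $j$-clique and a $k$-clique, with an arbitrary set of additional edges each joining a vertex of the $j$-clique to a vertex of the $k$-clique. For non-negative integers $a,b,c,d,e,f$, the notation $(a,b,c,d,e,f)$ denotes the $(3,k)$-biclique with $k=a+b+c+d+e+f$, whose $3$-clique is $\{v_1,v_2,v_3\}$, in which every vertex of the $k$-clique is adjacent to exactly one or exactly two of $v_1,v_2,v_3$, and exactly $a$ (resp. $b$, $c$) vertices of the $k$-clique are adjacent to $v_1$ only (resp. $v_2$ only, $v_3$ only), and exactly $d$ (resp. $e$, $f$) vertices of the $k$-clique are adjacent to exactly $v_2$ and $v_3$ (resp. exactly $v_1$ and $v_3$, exactly $v_1$ and $v_2$). This determines the graph up to isomorphism. The interesting factor of a $(3,k)$-biclique $G$ is the cubic polynomial $P_G(x)/(x)_k$, where $P_G$ is the chromatic polynomial and $(x)_k=x(x-1)\cdots(x-k+1)$. *)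

theory Defs
  imports "HOL-Computational_Algebra.Polynomial" "HOL-Library.FuncSet"
begin

definition num_colorings :: "'a set \<Rightarrow> ('a \<Rightarrow> 'a \<Rightarrow> bool) \<Rightarrow> nat \<Rightarrow> nat" where
  "num_colorings V E n =
     card {c \<in> V \<rightarrow>\<^sub>E {0..<n}. \<forall>i\<in>V. \<forall>j\<in>V. E i j \<longrightarrow> c i \<noteq> c j}"

definition chromatic_poly :: "'a set \<Rightarrow> ('a \<Rightarrow> 'a \<Rightarrow> bool) \<Rightarrow> real poly" where
  "chromatic_poly V E = (THE p. \<forall>n::nat. poly p (real n) = real (num_colorings V E n))"

definition falling_poly :: "nat \<Rightarrow> real poly" where
  "falling_poly k = (\<Prod>i<k. [:- real i, 1:])"

(* The (3,k)-biclique (a,b,c,d,e,f): vertices 0,1,2 are v1,v2,v3; vertices 3..k+2 form the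
   k-clique, k = a+b+c+d+e+f. *)
definition bic_nbrs :: "nat \<Rightarrow> nat \<Rightarrow> nat \<Rightarrow> nat \<Rightarrow> nat \<Rightarrow> nat \<Rightarrow> nat set" where
  "bic_nbrs a b c d e m =
     (if m < a then {0}
      else if m < a+b then {1}
      else if m < a+b+c then {2}
      else if m < a+b+c+d then {1,2}
      else if m < a+b+c+d+e then {0,2}
      else {0,1})"

definition bic_verts :: "nat \<Rightarrow> nat \<Rightarrow> nat \<Rightarrow> nat \<Rightarrow> nat \<Rightarrow> nat \<Rightarrow> nat set" where
  "bic_verts a b c d e f = {0..<a+b+c+d+e+f+3}"

definition bic_adj :: "nat \<Rightarrow> nat \<Rightarrow> nat \<Rightarrow> nat \<Rightarrow> nat \<Rightarrow> nat \<Rightarrow> nat \<Rightarrow> nat \<Rightarrow> bool" where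
  "bic_adj a b c d e f i j =
     (i \<noteq> j \<and>
      ((i < 3 \<and> j < 3) \<or> (3 \<le> i \<and> 3 \<le> j) \<or>
       (i < 3 \<and> 3 \<le> j \<and> i \<in> bic_nbrs a b c d e (j - 3)) \<or>
       (j < 3 \<and> 3 \<le> i \<and> j \<in> bic_nbrs a b c d e (i - 3))))"

definition interesting_factor :: "nat \<Rightarrow> nat \<Rightarrow> nat \<Rightarrow> nat \<Rightarrow> nat \<Rightarrow> nat \<Rightarrow> real poly" where
  "interesting_factor a b c d e f =
     chromatic_poly (bic_verts a b c d e f) (bic_adj a b c d e f) div falling_poly (a+b+c+d+e+f)"

end

theory Submission
  imports Defs
begin

(* Let G = (a,b,c,d,e,f) with k = a+b+c+d+e+f and triangle v1 v2 v3.  A proper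
   n-colouring of G is an injective colouring h of the k-clique together with a triple of
   pairwise distinct colours for v1, v2, v3, where v_i avoids the colours h uses on its
   neighbourhood N_i in the clique.  Since h is injective, the number of colours avoided by
   v_i (and by two or three of them jointly) only depends on the sizes of N_i and of their
   unions, so inclusion-exclusion over distinct triples gives a count g(n) independent of h.
   There are (n)_k choices of h, hence P_G = (x)_k * g, and the interesting factor is the
   explicit cubic g.  The theorem is then a polynomial identity in the parameters. *)

definition distinct_triples :: "'a set \<Rightarrow> 'a set \<Rightarrow> 'a set \<Rightarrow> ('a \<times> 'a \<times> 'a) set" where
  "distinct_triples A1 A2 A3 =
     {(x, y, z). x \<in> A1 \<and> y \<in> A2 \<and> z \<in> A3 \<and> x \<noteq> y \<and> x \<noteq> z \<and> y \<noteq> z}"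

(* Pairs of distinct elements: all pairs minus the diagonal. *)
lemma card_distinct_pairs:
  assumes "finite B" "finite C"
  shows "int (card {(y, z). y \<in> B \<and> z \<in> C \<and> y \<noteq> z}) =
           int (card B) * int (card C) - int (card (B \<inter> C))"
proof -
  let ?P = "{(y, z). y \<in> B \<and> z \<in> C \<and> y \<noteq> z}"
  have split: "B \<times> C = ?P \<union> (\<lambda>y. (y, y)) ` (B \<inter> C)" by auto
  have "finite ?P" by (rule finite_subset[of _ "B \<times> C"]) (use assms in auto)
  then have "card (B \<times> C) = card ?P + card ((\<lambda>y. (y, y)) ` (B \<inter> C))"
    unfolding split by (rule card_Un_disjoint) (use assms in auto)
  moreover have "card ((\<lambda>y. (y, y)) ` (B \<inter> C)) = card (B \<inter> C)"
    by (rule card_image) (auto simp: inj_on_def)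
  ultimately have "int (card B) * int (card C) = int (card ?P) + int (card (B \<inter> C))"
    by (simp add: card_cartesian_product flip: of_nat_mult)
  then show ?thesis by simp
qed

(* Removing one point, as an integer identity (no truncated subtraction). *)
lemma card_Diff_singleton_int:
  "finite S \<Longrightarrow> int (card (S - {x})) = int (card S) - of_bool (x \<in> S)"
proof (cases "x \<in> S")
  case True
  assume "finite S"
  with True have "card S > 0" by (auto simp: card_gt_0_iff)
  with True \<open>finite S\<close> show ?thesis by (simp add: card_Diff_singleton of_nat_diff)
qed simp

(* Inclusion-exclusion count of distinct triples: choose x, then a distinct pair avoiding x. *)
lemma card_distinct_triples:
  assumes "finite A1" "finite A2" "finite A3"
  shows "int (card (distinct_triples A1 A2 A3)) =
     int (card A1) * int (card A2) * int (card A3) - int (card (A1 \<inter> A2)) * int (card A3)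
     - int (card (A1 \<inter> A3)) * int (card A2) - int (card (A2 \<inter> A3)) * int (card A1)
     + 2 * int (card (A1 \<inter> A2 \<inter> A3))"
proof -
  define P where "P x = {(y, z). y \<in> A2 - {x} \<and> z \<in> A3 - {x} \<and> y \<noteq> z}" for x
  have triples: "distinct_triples A1 A2 A3 = Sigma A1 P"
    by (auto simp: P_def distinct_triples_def)
  have fin_P: "finite (P x)" for x
    by (rule finite_subset[of _ "A2 \<times> A3"]) (use assms in \<open>auto simp: P_def\<close>)
  have card_P: "int (card (P x)) = int (card A2) * int (card A3) - int (card A3) * of_bool (x \<in> A2)
        - int (card A2) * of_bool (x \<in> A3) - int (card (A2 \<inter> A3)) + 2 * of_bool (x \<in> A2 \<inter> A3)"
    for x
  proof -
    have "(A2 - {x}) \<inter> (A3 - {x}) = (A2 \<inter> A3) - {x}" by auto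
    then show ?thesis
      using card_distinct_pairs[of "A2 - {x}" "A3 - {x}"] assms
      by (simp add: P_def card_Diff_singleton_int algebra_simps)
  qed
  have "int (card (Sigma A1 P)) = (\<Sum>x\<in>A1. int (card (P x)))"
    using card_SigmaI[of A1 P] assms fin_P by simp
  also have "\<dots> = int (card A1) * int (card A2) * int (card A3)
        - int (card A3) * (\<Sum>x\<in>A1. of_bool (x \<in> A2)) - int (card A2) * (\<Sum>x\<in>A1. of_bool (x \<in> A3))
        - int (card A1) * int (card (A2 \<inter> A3)) + 2 * (\<Sum>x\<in>A1. of_bool (x \<in> A2 \<inter> A3))"
    by (simp add: card_P sum_subtractf sum.distrib sum_distrib_left)
  also have "\<dots> = int (card A1) * int (card A2) * int (card A3) - int (card (A1 \<inter> A2)) * int (card A3)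
     - int (card (A1 \<inter> A3)) * int (card A2) - int (card (A2 \<inter> A3)) * int (card A1)
     + 2 * int (card (A1 \<inter> A2 \<inter> A3))"
    using assms by (simp add: sum_of_bool_eq Int_assoc Int_def algebra_simps)
  finally show ?thesis unfolding triples .
qed

lemma card_Diff_inj_image:
  assumes "inj_on h M" "h ` M \<subseteq> A" "finite A"
  shows "int (card (A - h ` M)) = int (card A) - int (card M)"
proof -
  have "card (h ` M) \<le> card A" using assms card_mono by blast
  then show ?thesis
    using card_Diff_subset[OF finite_subset[OF assms(2,3)] assms(2)] card_image[OF assms(1)]
    by simp
qed

definition clique_colourings :: "nat \<Rightarrow> 'b set \<Rightarrow> (nat \<Rightarrow> 'b) set" where
  "clique_colourings k A = {h \<in> {..<k} \<rightarrow>\<^sub>E A. inj_on h {..<k}}"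

(* At a natural number n, (x)_k evaluates to n (n-1) ... (n-k+1), which is 0 when n < k. *)
lemma poly_falling_poly_of_nat:
  "poly (falling_poly k) (real n) = real (\<Prod>i\<in>{0..<k}. n - i)"
proof (cases "k \<le> n")
  case True
  then have "(\<Prod>i\<in>{0..<k}. real n - real i) = (\<Prod>i\<in>{0..<k}. real (n - i))"
    by (intro prod.cong) auto
  then show ?thesis by (simp add: falling_poly_def poly_prod lessThan_atLeast0)
next
  case False
  then have "n \<in> {0..<k}" by auto
  then have real_zero: "(\<Prod>i\<in>{0..<k}. real n - real i) = 0"
    and nat_zero: "(\<Prod>i\<in>{0..<k}. n - i) = 0"
    by (auto intro!: prod_zero bexI[of _ n])
  show ?thesis
    by (simp add: falling_poly_def poly_prod lessThan_atLeast0 real_zero nat_zero del: of_nat_prod)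
qed

lemma card_clique_colourings:
  "real (card (clique_colourings k {0..<n})) = poly (falling_poly k) (real n)"
  using card_inj_on_subset_funcset[of "{..<k}" "{0..<n::nat}" "{..<k}"]
  by (simp add: clique_colourings_def poly_falling_poly_of_nat)

(* A polynomial agreeing with the number of colourings at every natural number is the
   chromatic polynomial (polynomials are determined by infinitely many values). *)
lemma chromatic_poly_eqI:
  assumes "\<And>n. poly p (real n) = real (num_colorings V E n)"
  shows "chromatic_poly V E = p"
  unfolding chromatic_poly_def
proof (rule the_equality)
  fix q assume q: "\<forall>n. poly q (real n) = real (num_colorings V E n)"
  have "range real \<subseteq> {x. poly (q - p) x = 0}" using q assms by auto
  moreover have "infinite (range real)" by (rule range_inj_infinite) (simp add: inj_on_def)
  ultimately have "infinite {x. poly (q - p) x = 0}" using finite_subset by blast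
  then show "q = p" using poly_roots_finite[of "q - p"] by auto
qed (use assms in simp)

definition clique_nbhd :: "nat \<Rightarrow> nat \<Rightarrow> nat \<Rightarrow> nat \<Rightarrow> nat \<Rightarrow> nat \<Rightarrow> nat \<Rightarrow> nat set" where
  "clique_nbhd a b c d e f i = {m \<in> {..<a+b+c+d+e+f}. i \<in> bic_nbrs a b c d e m}"

lemma card_bic_nbrs_filter:
  "card {m \<in> {..<a+b+c+d+e+f}. Q (bic_nbrs a b c d e m)} =
     a * of_bool (Q {0}) + b * of_bool (Q {1}) + c * of_bool (Q {2}) +
     d * of_bool (Q {1,2}) + e * of_bool (Q {0,2}) + f * of_bool (Q {0,1})"
proof -
  let ?g = "\<lambda>m. of_bool (Q (bic_nbrs a b c d e m)) :: nat"
  have block: "sum ?g {x..<x+y} = y * of_bool (Q S)"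
    if "\<And>m. x \<le> m \<Longrightarrow> m < x+y \<Longrightarrow> bic_nbrs a b c d e m = S" for x y S
    using that by (simp add: sum.cong[of _ _ _ "\<lambda>_. of_bool (Q S)"])
  have "card {m \<in> {..<a+b+c+d+e+f}. Q (bic_nbrs a b c d e m)} = sum ?g {0..<a+b+c+d+e+f}"
    by (simp add: sum_of_bool_eq lessThan_atLeast0 Int_def conj_commute)
  also have "\<dots> = sum ?g {0..<0+a} + sum ?g {a..<a+b} + sum ?g {a+b..<a+b+c}
      + sum ?g {a+b+c..<a+b+c+d} + sum ?g {a+b+c+d..<a+b+c+d+e}
      + sum ?g {a+b+c+d+e..<a+b+c+d+e+f}"
    by (simp only: sum.atLeastLessThan_concat add.assoc[symmetric] add_0 le_add1 le_add2 zero_le)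
  also have "\<dots> = a * of_bool (Q {0}) + b * of_bool (Q {1}) + c * of_bool (Q {2}) +
     d * of_bool (Q {1,2}) + e * of_bool (Q {0,2}) + f * of_bool (Q {0,1})"
    by (simp only: block bic_nbrs_def) (auto simp: bic_nbrs_def)
  finally show ?thesis .
qed

lemma card_clique_nbhd:
  fixes a b c d e f :: nat
  defines "N \<equiv> clique_nbhd a b c d e f"
  shows "card (N 0) = a+e+f" "card (N 1) = b+d+f" "card (N 2) = c+d+e"
    and "card (N 0 \<union> N 1) = a+b+d+e+f" "card (N 0 \<union> N 2) = a+c+d+e+f"
    and "card (N 1 \<union> N 2) = b+c+d+e+f"
  using card_bic_nbrs_filter[where Q = "\<lambda>S. 0 \<in> S" and a=a and b=b and c=c and d=d and e=e and f=f]
    card_bic_nbrs_filter[where Q = "\<lambda>S. 1 \<in> S" and a=a and b=b and c=c and d=d and e=e and f=f]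
    card_bic_nbrs_filter[where Q = "\<lambda>S. 2 \<in> S" and a=a and b=b and c=c and d=d and e=e and f=f]
    card_bic_nbrs_filter[where Q = "\<lambda>S. 0 \<in> S \<or> 1 \<in> S" and a=a and b=b and c=c and d=d and e=e and f=f]
    card_bic_nbrs_filter[where Q = "\<lambda>S. 0 \<in> S \<or> 2 \<in> S" and a=a and b=b and c=c and d=d and e=e and f=f]
    card_bic_nbrs_filter[where Q = "\<lambda>S. 1 \<in> S \<or> 2 \<in> S" and a=a and b=b and c=c and d=d and e=e and f=f]
  by (simp_all add: N_def clique_nbhd_def Un_def conj_disj_distribL)

lemma clique_nbhd_cover:
  "clique_nbhd a b c d e f 0 \<union> clique_nbhd a b c d e f 1 \<union> clique_nbhd a b c d e f 2 =
     {..<a+b+c+d+e+f}"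
  by (auto simp: clique_nbhd_def bic_nbrs_def)

definition split_colouring :: "nat \<Rightarrow> (nat \<Rightarrow> 'b) \<Rightarrow> (nat \<Rightarrow> 'b) \<times> 'b \<times> 'b \<times> 'b" where
  "split_colouring k col = (\<lambda>m\<in>{..<k}. col (m + 3), col 0, col 1, col 2)"

lemma bij_split_colouring:
  "bij_betw (split_colouring k) ({0..<k+3} \<rightarrow>\<^sub>E A) (({..<k} \<rightarrow>\<^sub>E A) \<times> A \<times> A \<times> A)"
proof (rule bij_betw_byWitness[where f' = "\<lambda>(h, x, y, z). \<lambda>i\<in>{0..<k+3}.
          if i = 0 then x else if i = 1 then y else if i = 2 then z else h (i - 3)"])
  show "\<forall>col\<in>{0..<k+3} \<rightarrow>\<^sub>E A. (\<lambda>(h, x, y, z). \<lambda>i\<in>{0..<k+3}.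
          if i = 0 then x else if i = 1 then y else if i = 2 then z else h (i - 3))
          (split_colouring k col) = col"
  proof
    fix col assume "col \<in> {0..<k+3} \<rightarrow>\<^sub>E A"
    then have "col i = undefined" if "\<not> i < k + 3" for i
      using that by (auto simp: PiE_def extensional_def)
    then show "(\<lambda>(h, x, y, z). \<lambda>i\<in>{0..<k+3}.
          if i = 0 then x else if i = 1 then y else if i = 2 then z else h (i - 3))
          (split_colouring k col) = col"
      by (auto simp: split_colouring_def fun_eq_iff)
  qed
  show "\<forall>p\<in>({..<k} \<rightarrow>\<^sub>E A) \<times> A \<times> A \<times> A. split_colouring k ((\<lambda>(h, x, y, z). \<lambda>i\<in>{0..<k+3}.
          if i = 0 then x else if i = 1 then y else if i = 2 then z else h (i - 3)) p) = p"
  proof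
    fix p assume "p \<in> ({..<k} \<rightarrow>\<^sub>E A) \<times> A \<times> A \<times> A"
    then obtain h x y z where p: "p = (h, x, y, z)" and h: "h \<in> {..<k} \<rightarrow>\<^sub>E A" by auto
    from h have "h m = undefined" if "\<not> m < k" for m
      using that by (auto simp: PiE_def extensional_def)
    then show "split_colouring k ((\<lambda>(h, x, y, z). \<lambda>i\<in>{0..<k+3}.
          if i = 0 then x else if i = 1 then y else if i = 2 then z else h (i - 3)) p) = p"
      by (auto simp: p split_colouring_def fun_eq_iff)
  qed
  show "split_colouring k ` ({0..<k+3} \<rightarrow>\<^sub>E A) \<subseteq> ({..<k} \<rightarrow>\<^sub>E A) \<times> A \<times> A \<times> A"
    by (auto simp: split_colouring_def PiE_iff split: if_splits)
  show "(\<lambda>(h, x, y, z). \<lambda>i\<in>{0..<k+3}.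
          if i = 0 then x else if i = 1 then y else if i = 2 then z else h (i - 3))
          ` (({..<k} \<rightarrow>\<^sub>E A) \<times> A \<times> A \<times> A) \<subseteq> {0..<k+3} \<rightarrow>\<^sub>E A"
    by (auto simp: PiE_def Pi_def)
qed

lemma bic_proper_iff:
  fixes a b c d e f :: nat
  defines "k \<equiv> a+b+c+d+e+f"
  defines "N \<equiv> clique_nbhd a b c d e f"
  assumes col: "col \<in> {0..<k+3} \<rightarrow>\<^sub>E A"
  shows "(\<forall>i\<in>bic_verts a b c d e f. \<forall>j\<in>bic_verts a b c d e f.
            bic_adj a b c d e f i j \<longrightarrow> col i \<noteq> col j) \<longleftrightarrow>
         split_colouring k col \<in> Sigma (clique_colourings k A)
            (\<lambda>h. distinct_triples (A - h ` N 0) (A - h ` N 1) (A - h ` N 2))"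
    (is "?proper \<longleftrightarrow> _")
proof -
  have all_less_3: "(\<forall>i<3. Q i) \<longleftrightarrow> Q 0 \<and> Q 1 \<and> Q 2" for Q :: "nat \<Rightarrow> bool"
    by (auto simp: less_Suc_eq numeral_3_eq_3 numeral_2_eq_2)
  have "?proper \<longleftrightarrow> (\<forall>i<k+3. \<forall>j<k+3. bic_adj a b c d e f i j \<longrightarrow> col i \<noteq> col j)"
    by (auto simp: bic_verts_def k_def)
  also have "\<dots> \<longleftrightarrow> col 0 \<noteq> col 1 \<and> col 0 \<noteq> col 2 \<and> col 1 \<noteq> col 2
      \<and> (\<forall>m1<k. \<forall>m2<k. col (m1 + 3) = col (m2 + 3) \<longrightarrow> m1 = m2)
      \<and> (\<forall>i<3. \<forall>m<k. i \<in> bic_nbrs a b c d e m \<longrightarrow> col i \<noteq> col (m + 3))"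
    (is "_ \<longleftrightarrow> ?local")
  proof
    assume p: "\<forall>i<k+3. \<forall>j<k+3. bic_adj a b c d e f i j \<longrightarrow> col i \<noteq> col j"
    show ?local
    proof (intro conjI allI impI)
      show "col 0 \<noteq> col 1" "col 0 \<noteq> col 2" "col 1 \<noteq> col 2"
        using p by (auto simp: bic_adj_def)
      show "m1 = m2" if "m1 < k" "m2 < k" "col (m1 + 3) = col (m2 + 3)" for m1 m2
        using p[rule_format, of "m1 + 3" "m2 + 3"] that by (auto simp: bic_adj_def)
      show "col i \<noteq> col (m + 3)" if "i < 3" "m < k" "i \<in> bic_nbrs a b c d e m" for i m
        using p[rule_format, of i "m + 3"] that by (auto simp: bic_adj_def)
    qed
  next
    assume l: ?local
    then have inj: "\<forall>m1<k. \<forall>m2<k. col (m1 + 3) = col (m2 + 3) \<longrightarrow> m1 = m2"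
      and nbr: "\<forall>i<3. \<forall>m<k. i \<in> bic_nbrs a b c d e m \<longrightarrow> col i \<noteq> col (m + 3)"
      by blast+
    show "\<forall>i<k+3. \<forall>j<k+3. bic_adj a b c d e f i j \<longrightarrow> col i \<noteq> col j"
    proof (intro allI impI)
      fix i j assume ij: "i < k+3" "j < k+3" "bic_adj a b c d e f i j"
      then consider "i < 3" "j < 3" | "3 \<le> i" "3 \<le> j"
        | "i < 3" "3 \<le> j" "i \<in> bic_nbrs a b c d e (j - 3)"
        | "j < 3" "3 \<le> i" "j \<in> bic_nbrs a b c d e (i - 3)"
        by (auto simp: bic_adj_def)
      then show "col i \<noteq> col j"
      proof cases
        case 1
        then have "i \<in> {0, 1, 2}" "j \<in> {0, 1, 2}" by auto
        then show ?thesis using l ij(3) by (auto simp: bic_adj_def)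
      next
        case 2
        then have "i - 3 < k" "j - 3 < k" "i - 3 \<noteq> j - 3"
          using ij by (auto simp: bic_adj_def)
        then have "col (i - 3 + 3) \<noteq> col (j - 3 + 3)" using inj by blast
        then show ?thesis using 2 by simp
      next
        case 3
        then have "j - 3 < k" using ij by simp
        then have "col i \<noteq> col (j - 3 + 3)" using nbr 3 by blast
        then show ?thesis using 3 by simp
      next
        case 4
        then have "i - 3 < k" using ij by simp
        then have "col j \<noteq> col (i - 3 + 3)" using nbr 4 by blast
        then show ?thesis using 4 by simp
      qed
    qed
  qed
  also have "\<dots> \<longleftrightarrow> split_colouring k col \<in> Sigma (clique_colourings k A)
            (\<lambda>h. distinct_triples (A - h ` N 0) (A - h ` N 1) (A - h ` N 2))"
    using col by (auto simp: all_less_3 split_colouring_def clique_colourings_def distinct_triples_def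
        N_def clique_nbhd_def k_def inj_on_def PiE_iff Pi_iff)
  finally show ?thesis .
qed

definition bic_cubic :: "nat \<Rightarrow> nat \<Rightarrow> nat \<Rightarrow> nat \<Rightarrow> nat \<Rightarrow> nat \<Rightarrow> real poly" where
  "bic_cubic a b c d e f =
       [:- real (a+e+f), 1:] * [:- real (b+d+f), 1:] * [:- real (c+d+e), 1:]
     - [:- real (a+b+d+e+f), 1:] * [:- real (c+d+e), 1:]
     - [:- real (a+c+d+e+f), 1:] * [:- real (b+d+f), 1:]
     - [:- real (b+c+d+e+f), 1:] * [:- real (a+e+f), 1:]
     + 2 * [:- real (a+b+c+d+e+f), 1:]"

lemma poly_bic_cubic:
  "poly (bic_cubic a b c d e f) x =
       (x - real (a+e+f)) * (x - real (b+d+f)) * (x - real (c+d+e))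
     - (x - real (a+b+d+e+f)) * (x - real (c+d+e))
     - (x - real (a+c+d+e+f)) * (x - real (b+d+f))
     - (x - real (b+c+d+e+f)) * (x - real (a+e+f))
     + 2 * (x - real (a+b+c+d+e+f))"
  by (simp add: bic_cubic_def algebra_simps)

lemma card_triples_avoiding_clique:
  fixes a b c d e f n :: nat
  defines "k \<equiv> a+b+c+d+e+f"
  defines "N \<equiv> clique_nbhd a b c d e f"
  assumes h: "h \<in> clique_colourings k {0..<n}"
  shows "real (card (distinct_triples ({0..<n} - h ` N 0) ({0..<n} - h ` N 1) ({0..<n} - h ` N 2))) =
     poly (bic_cubic a b c d e f) (real n)"
proof -
  have N_sub: "N i \<subseteq> {..<k}" for i by (auto simp: N_def clique_nbhd_def k_def)
  have card_avoid: "int (card ({0..<n} - h ` M)) = int n - int (card M)" if "M \<subseteq> {..<k}" for M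
  proof -
    have "inj_on h M" "h ` M \<subseteq> {0..<n}"
      using h that by (auto simp: clique_colourings_def intro: inj_on_subset)
    then show ?thesis using card_Diff_inj_image[of h M "{0..<n}"] by simp
  qed
  have avoid_Int: "({0..<n} - h ` M1) \<inter> ({0..<n} - h ` M2) = {0..<n} - h ` (M1 \<union> M2)" for M1 M2
    by auto
  have "int (card (distinct_triples ({0..<n} - h ` N 0) ({0..<n} - h ` N 1) ({0..<n} - h ` N 2))) =
       (int n - int (a+e+f)) * (int n - int (b+d+f)) * (int n - int (c+d+e))
     - (int n - int (a+b+d+e+f)) * (int n - int (c+d+e))
     - (int n - int (a+c+d+e+f)) * (int n - int (b+d+f))
     - (int n - int (b+c+d+e+f)) * (int n - int (a+e+f)) + 2 * (int n - int k)"
    using card_distinct_triples[of "{0..<n} - h ` N 0" "{0..<n} - h ` N 1" "{0..<n} - h ` N 2"]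
      card_avoid N_sub card_clique_nbhd[of a b c d e f] clique_nbhd_cover[of a b c d e f]
    by (simp add: avoid_Int N_def k_def)
  from arg_cong[OF this, of real_of_int] show ?thesis
    by (simp add: poly_bic_cubic k_def)
qed

lemma num_colorings_biclique_Sigma:
  fixes a b c d e f n :: nat
  defines "k \<equiv> a+b+c+d+e+f"
  defines "N \<equiv> clique_nbhd a b c d e f"
  shows "num_colorings (bic_verts a b c d e f) (bic_adj a b c d e f) n =
     card (SIGMA h:clique_colourings k {0..<n}.
             distinct_triples ({0..<n} - h ` N 0) ({0..<n} - h ` N 1) ({0..<n} - h ` N 2))"
    (is "_ = card ?S")
proof -
  define proper where "proper col \<longleftrightarrow> (\<forall>i\<in>bic_verts a b c d e f. \<forall>j\<in>bic_verts a b c d e f.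
      bic_adj a b c d e f i j \<longrightarrow> col i \<noteq> col j)" for col :: "nat \<Rightarrow> nat"
  let ?B = "({..<k} \<rightarrow>\<^sub>E {0..<n}) \<times> {0..<n} \<times> {0..<n} \<times> {0..<n}"
  have "bij_betw (split_colouring k) {col \<in> {0..<k+3} \<rightarrow>\<^sub>E {0..<n}. proper col} {p \<in> ?B. p \<in> ?S}"
    by (rule bij_betw_Collect[OF bij_split_colouring])
      (simp add: bic_proper_iff proper_def N_def k_def)
  moreover have "?S \<subseteq> ?B"
    unfolding clique_colourings_def distinct_triples_def by auto
  then have "{p \<in> ?B. p \<in> ?S} = ?S" by blast
  ultimately have "card {col \<in> {0..<k+3} \<rightarrow>\<^sub>E {0..<n}. proper col} = card ?S"
    using bij_betw_same_card by fastforce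
  then show ?thesis
    unfolding num_colorings_def proper_def bic_verts_def k_def .
qed

(* Summing the constant count g(n) over the (n)_k clique colourings: P_G(n) = (n)_k * g(n). *)
lemma num_colorings_biclique:
  "real (num_colorings (bic_verts a b c d e f) (bic_adj a b c d e f) n) =
     poly (falling_poly (a+b+c+d+e+f)) (real n) * poly (bic_cubic a b c d e f) (real n)"
proof -
  define k where "k = a+b+c+d+e+f"
  define N where "N = clique_nbhd a b c d e f"
  define H where "H = clique_colourings k {0..<n}"
  define T where "T = (\<lambda>h :: nat \<Rightarrow> nat.
      distinct_triples ({0..<n} - h ` N 0) ({0..<n} - h ` N 1) ({0..<n} - h ` N 2))"
  have "num_colorings (bic_verts a b c d e f) (bic_adj a b c d e f) n = card (Sigma H T)"
    by (simp add: num_colorings_biclique_Sigma H_def T_def N_def k_def)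
  also have "\<dots> = (\<Sum>h\<in>H. card (T h))"
  proof (rule card_SigmaI)
    show "finite H"
      unfolding H_def clique_colourings_def
      by (rule finite_subset[of _ "{..<k} \<rightarrow>\<^sub>E {0..<n}"]) (auto intro: finite_PiE)
    show "\<forall>h\<in>H. finite (T h)"
      unfolding T_def distinct_triples_def
      by (auto intro: finite_subset[of _ "{0..<n} \<times> {0..<n} \<times> {0..<n}"])
  qed
  finally have "real (num_colorings (bic_verts a b c d e f) (bic_adj a b c d e f) n) =
      (\<Sum>h\<in>H. real (card (T h)))" by simp
  also have "\<dots> = (\<Sum>h\<in>H. poly (bic_cubic a b c d e f) (real n))"
    using card_triples_avoiding_clique by (simp add: H_def T_def N_def k_def)
  also have "\<dots> = poly (falling_poly k) (real n) * poly (bic_cubic a b c d e f) (real n)"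
    using card_clique_colourings[of k n] by (simp add: H_def)
  finally show ?thesis by (simp add: k_def)
qed

lemma interesting_factor_eq_bic_cubic:
  "interesting_factor a b c d e f = bic_cubic a b c d e f"
proof -
  have "falling_poly (a+b+c+d+e+f) \<noteq> 0"
    by (auto simp: falling_poly_def)
  moreover have "chromatic_poly (bic_verts a b c d e f) (bic_adj a b c d e f) =
      falling_poly (a+b+c+d+e+f) * bic_cubic a b c d e f"
    by (rule chromatic_poly_eqI) (simp add: num_colorings_biclique)
  ultimately show ?thesis by (simp add: interesting_factor_def)
qed

theorem mainTheorem7:
  fixes r s t u v :: nat
  assumes "int u + int v = 4 * int t - int r - int s + 3"
  shows "interesting_factor r s t t t u =
           - pcompose (interesting_factor r s t t t v) [:6 * real t + 4, -1:]"
proof -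
  have v: "real v = 4 * real t - real r - real s + 3 - real u"
    using arg_cong[OF assms, of real_of_int] by simp
  have "poly (bic_cubic r s t t t u) x = poly (- pcompose (bic_cubic r s t t t v) [:6 * real t + 4, -1:]) x"
    for x
    by (simp add: poly_pcompose poly_bic_cubic v algebra_simps)
  then show ?thesis
    unfolding interesting_factor_eq_bic_cubic by (intro poly_eq_poly_eq_iff[THEN iffD1] ext)
qed

end
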